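(* Let $G=(V,E,H)$ be a HEDG and $X,Y,Z\subseteq V$. Let $A=\mathrm{Anc}^G(X\cup Y\cup Z)$ with its induced sub-HEDG structure and $A^{\mathrm{moral}}$ its moralization. Then $X\perp^d_G Y\mid Z$ if and only if $X$ is separated from $Y$ given $Z$ in the undirected graph $A^{\mathrm{moral}}$.
   Context: A HEDG is $G=(V,E,H)$: $V$ finite, $E\subseteq V\times V$ directed edges (self-loops allowed), $H$ a simplicial complex on $V$ (contains all singletons, closed under subsets); for distinct $v,w$, $v\leftrightarrow w$ means $\{v,w\}\in H$. $\mathrm{Pa}^G(v)=\{u:(u,v)\in E\}$; $\mathrm{Anc}^G(S)$ = nodes with a directed path into $S$ (including $S$). The induced sub-HEDG on $A$ is $(A,E\cap A^2,\{F\in H:F\subseteq A\})$. Moralization: undirected graph on the node set with $v - w$ ($v\ne w$) iff there exist nodes $v_1,\dots,v_n$ ($n\ge1$) with $v\in\{v_1\}\cup\mathrm{Pa}(v_1)$, $w\in\{v_n\}\cup\mathrm{Pa}(v_n)$ and $v_1\leftrightarrow v_2\leftrightarrow\cdots\leftrightarrow v_n$. A path is a sequence of nodes (repetitions allowed, $n\ge1$) with consecutive nodes joined by an edge $\to$, $\leftarrow$ or $\leftrightarrow$. It is $Z$-blocked if an endnode is in $Z$, or some intermediate node $v_i$ is a collider (both adjacent edges have an arrowhead at $v_i$) with $v_i\notin\mathrm{Anc}^G(Z)$, or some intermediate non-collider lies in $Z$. $X\perp^d_G Y\mid Z$ iff every path with one endnode in $X$ and the other in $Y$ is $Z$-blocked.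 In an undirected graph, $X$ is separated from $Y$ given $Z$ if every path with one endnode in $X$ and the other in $Y$ contains a node of $Z$. *)

theory Defs
  imports Main
begin

definition hedg :: "'a set \<Rightarrow> ('a \<times> 'a) set \<Rightarrow> 'a set set \<Rightarrow> bool" where
  "hedg V E H \<longleftrightarrow> finite V \<and> E \<subseteq> V \<times> V \<and> H \<subseteq> Pow V
     \<and> (\<forall>v\<in>V. {v} \<in> H) \<and> (\<forall>F\<in>H. \<forall>F'. F' \<subseteq> F \<longrightarrow> F' \<in> H)"

definition bidir :: "'a set set \<Rightarrow> 'a \<Rightarrow> 'a \<Rightarrow> bool" where
  "bidir H v w \<longleftrightarrow> v \<noteq> w \<and> {v, w} \<in> H"

definition Pa :: "('a \<times> 'a) set \<Rightarrow> 'a \<Rightarrow> 'a set" where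
  "Pa E v = {u. (u, v) \<in> E}"

definition Anc :: "('a \<times> 'a) set \<Rightarrow> 'a set \<Rightarrow> 'a set" where
  "Anc E S = {u. \<exists>v\<in>S. (u, v) \<in> E\<^sup>*}"

definition induced_E :: "('a \<times> 'a) set \<Rightarrow> 'a set \<Rightarrow> ('a \<times> 'a) set" where
  "induced_E E A = E \<inter> (A \<times> A)"

definition induced_H :: "'a set set \<Rightarrow> 'a set \<Rightarrow> 'a set set" where
  "induced_H H A = {F \<in> H. F \<subseteq> A}"

definition moral_adj :: "'a set \<Rightarrow> ('a \<times> 'a) set \<Rightarrow> 'a set set \<Rightarrow> 'a \<Rightarrow> 'a \<Rightarrow> bool" where
  "moral_adj V E H v w \<longleftrightarrow> v \<noteq> w \<and>
     (\<exists>cs. cs \<noteq> [] \<and> set cs \<subseteq> V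
        \<and> (\<forall>i. Suc i < length cs \<longrightarrow> bidir H (cs ! i) (cs ! Suc i))
        \<and> v \<in> {hd cs} \<union> Pa E (hd cs) \<and> w \<in> {last cs} \<union> Pa E (last cs))"

text \<open>Edge kinds between consecutive nodes v_i, v_(i+1) of a path:
  Fwd: v_i \<rightarrow> v_(i+1); Bwd: v_i \<leftarrow> v_(i+1); Bi: v_i \<leftrightarrow> v_(i+1).\<close>
datatype ekind = Fwd | Bwd | Bi

definition edge_ok :: "('a \<times> 'a) set \<Rightarrow> 'a set set \<Rightarrow> 'a \<Rightarrow> ekind \<Rightarrow> 'a \<Rightarrow> bool" where
  "edge_ok E H v k w \<longleftrightarrow> (case k of
      Fwd \<Rightarrow> (v, w) \<in> E
    | Bwd \<Rightarrow> (w, v) \<in> E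
    | Bi \<Rightarrow> bidir H v w)"

definition is_path :: "'a set \<Rightarrow> ('a \<times> 'a) set \<Rightarrow> 'a set set \<Rightarrow> 'a list \<Rightarrow> ekind list \<Rightarrow> bool" where
  "is_path V E H vs es \<longleftrightarrow> vs \<noteq> [] \<and> set vs \<subseteq> V \<and> length es = length vs - 1
     \<and> (\<forall>i < length es. edge_ok E H (vs ! i) (es ! i) (vs ! Suc i))"

definition collider :: "ekind list \<Rightarrow> nat \<Rightarrow> bool" where
  "collider es i \<longleftrightarrow> (es ! (i - 1) = Fwd \<or> es ! (i - 1) = Bi) \<and> (es ! i = Bwd \<or> es ! i = Bi)"

definition blocked :: "('a \<times> 'a) set \<Rightarrow> 'a set \<Rightarrow> 'a list \<Rightarrow> ekind list \<Rightarrow> bool" where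
  "blocked E Z vs es \<longleftrightarrow> hd vs \<in> Z \<or> last vs \<in> Z \<or>
     (\<exists>i. 0 < i \<and> i < length vs - 1 \<and>
        ((collider es i \<and> vs ! i \<notin> Anc E Z) \<or> (\<not> collider es i \<and> vs ! i \<in> Z)))"

definition d_sep :: "'a set \<Rightarrow> ('a \<times> 'a) set \<Rightarrow> 'a set set \<Rightarrow> 'a set \<Rightarrow> 'a set \<Rightarrow> 'a set \<Rightarrow> bool" where
  "d_sep V E H X Y Z \<longleftrightarrow> (\<forall>vs es. is_path V E H vs es \<and>
      ((hd vs \<in> X \<and> last vs \<in> Y) \<or> (hd vs \<in> Y \<and> last vs \<in> X))
      \<longrightarrow> blocked E Z vs es)"

definition upath :: "'a set \<Rightarrow> ('a \<Rightarrow> 'a \<Rightarrow> bool) \<Rightarrow> 'a list \<Rightarrow> bool" where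
  "upath N adj vs \<longleftrightarrow> vs \<noteq> [] \<and> set vs \<subseteq> N
     \<and> (\<forall>i. Suc i < length vs \<longrightarrow> adj (vs ! i) (vs ! Suc i))"

definition usep :: "'a set \<Rightarrow> ('a \<Rightarrow> 'a \<Rightarrow> bool) \<Rightarrow> 'a set \<Rightarrow> 'a set \<Rightarrow> 'a set \<Rightarrow> bool" where
  "usep N adj X Y Z \<longleftrightarrow> (\<forall>vs. upath N adj vs \<and>
      ((hd vs \<in> X \<and> last vs \<in> Y) \<or> (hd vs \<in> Y \<and> last vs \<in> X))
      \<longrightarrow> set vs \<inter> Z \<noteq> {})"

end

theory Submission
  imports Defs
begin

(* Every node of a d-connecting path lies in A: following the arrows from it, one reaches a
   collider (an ancestor of Z) or an endpoint. Its non-colliders avoid Z, and two consecutive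
   non-colliders u, w are joined by a segment u \<rightarrow> c1 \<leftrightarrow> ... \<leftrightarrow> cn \<leftarrow> w through colliders, which is
   precisely a moral edge u - w of A (with u = c1 or w = cn allowed). So a d-connecting path
   gives a moral path avoiding Z.
   Conversely, each edge of a moral path avoiding Z expands to such a segment, but its colliders
   are only known to lie in A = Anc(X \<union> Y \<union> Z). When a collider c that is not an ancestor of Z
   is reached, c is an ancestor of Y, and following the arrows down from c reaches Y, or c is an
   ancestor of X, and the walk is restarted at that node of X, going up to c. Since paths may
   repeat nodes, both directions work with walks built edge by edge. *)

lemma successively_iff_nth:
  "successively P xs \<longleftrightarrow> (\<forall>i. Suc i < length xs \<longrightarrow> P (xs ! i) (xs ! Suc i))"
  by (induction P xs rule: successively.induct) (auto simp: nth_Cons split: nat.splits)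

lemma upath_iff_successively:
  "upath N adj vs \<longleftrightarrow> vs \<noteq> [] \<and> set vs \<subseteq> N \<and> successively adj vs"
  by (simp add: upath_def successively_iff_nth)

lemma set_eq_insert_last_butlast: "xs \<noteq> [] \<Longrightarrow> set xs = insert (last xs) (set (butlast xs))"
  by (induction xs) auto

lemma subset_Anc: "S \<subseteq> Anc E S"
  unfolding Anc_def by blast

lemma Anc_mono: "S \<subseteq> T \<Longrightarrow> Anc E S \<subseteq> Anc E T"
  unfolding Anc_def by blast

lemma Anc_rtrancl_closed: "(u, v) \<in> E\<^sup>* \<Longrightarrow> v \<in> Anc E S \<Longrightarrow> u \<in> Anc E S"
  unfolding Anc_def by (blast intro: rtrancl_trans)

lemma Anc_subset: "S \<subseteq> V \<Longrightarrow> E \<subseteq> V \<times> V \<Longrightarrow> Anc E S \<subseteq> V"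
  unfolding Anc_def by (auto elim: converse_rtranclE)

(* How a walk arrives at its current end node: not at all (the walk is a single node), with an
   arrowhead (along \<rightarrow> or \<leftrightarrow>), or with a tail (along \<leftarrow>). *)
datatype arrival = Start | Head | Tail

definition arrival_of :: "ekind \<Rightarrow> arrival" where
  "arrival_of k = (if k = Bwd then Tail else Head)"

definition end_arrival :: "ekind list \<Rightarrow> arrival" where
  "end_arrival es = (if es = [] then Start else arrival_of (last es))"

lemma arrival_of_neq_Start [simp]: "arrival_of k \<noteq> Start"
  by (simp add: arrival_of_def)

lemma collider_iff_arrival: "collider es i \<longleftrightarrow> arrival_of (es ! (i - 1)) = Head \<and> es ! i \<noteq> Fwd"
  unfolding collider_def arrival_of_def by (cases "es ! (i - 1)"; cases "es ! i") auto

lemma is_path_snoc: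
  assumes "vs \<noteq> []"
  shows "is_path V E H (vs @ [w]) (es @ [k]) \<longleftrightarrow>
    is_path V E H vs es \<and> edge_ok E H (last vs) k w \<and> w \<in> V" (is "?lhs \<longleftrightarrow> ?rhs")
proof
  assume ?lhs
  then have len: "length es = length vs - 1" and edges:
    "\<forall>i < Suc (length es). edge_ok E H ((vs @ [w]) ! i) ((es @ [k]) ! i) ((vs @ [w]) ! Suc i)"
    using assms by (auto simp: is_path_def)
  have "edge_ok E H (vs ! i) (es ! i) (vs ! Suc i)" if "i < length es" for i
  proof -
    have "(vs @ [w]) ! i = vs ! i" "(vs @ [w]) ! Suc i = vs ! Suc i" "(es @ [k]) ! i = es ! i"
      using that len by (auto simp: nth_append)
    then show ?thesis
      using edges that by (metis less_SucI)
  qed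
  moreover have "edge_ok E H (last vs) k w"
    using edges[rule_format, of "length es"] len assms by (simp add: nth_append last_conv_nth)
  ultimately show ?rhs
    using \<open>?lhs\<close> len assms by (auto simp: is_path_def)
next
  assume ?rhs
  then have len: "length es = length vs - 1" and edges:
    "\<forall>i < length es. edge_ok E H (vs ! i) (es ! i) (vs ! Suc i)"
    by (auto simp: is_path_def)
  show ?lhs
    unfolding is_path_def
  proof (intro conjI allI impI)
    fix i
    assume "i < length (es @ [k])"
    then consider "i < length es" | "i = length es"
      by fastforce
    then show "edge_ok E H ((vs @ [w]) ! i) ((es @ [k]) ! i) ((vs @ [w]) ! Suc i)"
    proof cases
      case 1
      then show ?thesis
        using edges len by (auto simp: nth_append)
    next
      case 2
      then show ?thesis
        using \<open>?rhs\<close> len assms by (auto simp: nth_append last_conv_nth)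
    qed
  qed (use \<open>?rhs\<close> len assms in \<open>auto simp: is_path_def\<close>)
qed

lemma Pa_induced_E_iff: "u \<in> Pa (induced_E E B) v \<longleftrightarrow> (u, v) \<in> E \<and> u \<in> B \<and> v \<in> B"
  by (auto simp: Pa_def induced_E_def)

lemma bidir_induced_H_iff: "bidir (induced_H H B) v w \<longleftrightarrow> bidir H v w \<and> v \<in> B \<and> w \<in> B"
  by (auto simp: bidir_def induced_H_def)

lemma upath_snoc: "upath N adj ms \<Longrightarrow> w \<in> N \<Longrightarrow> adj (last ms) w \<Longrightarrow> upath N adj (ms @ [w])"
  by (auto simp: upath_iff_successively successively_append_iff)

locale hedg_walks =
  fixes V :: "'a set" and E :: "('a \<times> 'a) set" and H :: "'a set set" and Z :: "'a set"
  assumes edges_in_nodes: "E \<subseteq> V \<times> V"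
begin

(* A walk arriving at v continues along an edge of kind k without being blocked at v;
   v is a collider exactly when a = Head and k \<noteq> Fwd. *)
definition passable :: "'a \<Rightarrow> arrival \<Rightarrow> ekind \<Rightarrow> bool" where
  "passable v a k \<longleftrightarrow> a = Start \<or> (if a = Head \<and> k \<noteq> Fwd then v \<in> Anc E Z else v \<notin> Z)"

definition inner_open :: "'a list \<Rightarrow> ekind list \<Rightarrow> bool" where
  "inner_open vs es \<longleftrightarrow>
    (\<forall>i. 0 < i \<and> i < length vs - 1 \<longrightarrow> passable (vs ! i) (arrival_of (es ! (i - 1))) (es ! i))"

lemma blocked_iff_not_inner_open:
  "blocked E Z vs es \<longleftrightarrow> hd vs \<in> Z \<or> last vs \<in> Z \<or> \<not> inner_open vs es"
  unfolding blocked_def inner_open_def passable_def collider_iff_arrival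
  by auto

lemma inner_open_snoc:
  assumes "vs \<noteq> []" and "length es = length vs - 1"
  shows "inner_open (vs @ [w]) (es @ [k]) \<longleftrightarrow> inner_open vs es \<and> passable (last vs) (end_arrival es) k"
proof -
  let ?p = "\<lambda>vs es i. passable (vs ! i) (arrival_of (es ! (i - 1))) (es ! i)"
  have old: "?p (vs @ [w]) (es @ [k]) i = ?p vs es i" if "0 < i" "i < length vs - 1" for i
  proof -
    have "(vs @ [w]) ! i = vs ! i" "(es @ [k]) ! i = es ! i" "(es @ [k]) ! (i - 1) = es ! (i - 1)"
      using that assms by (auto simp: nth_append)
    then show ?thesis by simp
  qed
  have new: "?p (vs @ [w]) (es @ [k]) (length es) = passable (last vs) (end_arrival es) k"
    if "es \<noteq> []"
  proof -
    have "(vs @ [w]) ! length es = last vs" "(es @ [k]) ! length es = k"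
      "(es @ [k]) ! (length es - 1) = last es"
      using that assms by (auto simp: nth_append last_conv_nth)
    then show ?thesis
      using that by (simp add: end_arrival_def)
  qed
  have start: "passable (last vs) (end_arrival es) k" if "es = []"
    using that by (simp add: passable_def end_arrival_def)
  have inner: "0 < i \<and> i < length (vs @ [w]) - 1 \<longleftrightarrow>
      (0 < i \<and> i < length vs - 1) \<or> (es \<noteq> [] \<and> i = length es)" for i
    using assms by (cases es) auto
  show ?thesis
    unfolding inner_open_def inner using old new start by blast
qed

inductive open_walk :: "'a \<Rightarrow> 'a \<Rightarrow> arrival \<Rightarrow> bool" for x where
  open_walk_start: "x \<in> V \<Longrightarrow> open_walk x x Start"
| open_walk_step: "open_walk x v a \<Longrightarrow> edge_ok E H v k w \<Longrightarrow> w \<in> V \<Longrightarrow> passable v a k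
    \<Longrightarrow> open_walk x w (arrival_of k)"

lemma open_walk_imp_path:
  assumes "open_walk x v a"
  shows "\<exists>vs es. is_path V E H vs es \<and> inner_open vs es \<and> hd vs = x \<and> last vs = v
    \<and> end_arrival es = a"
  using assms
proof (induction rule: open_walk.induct)
  case open_walk_start
  then show ?case
    by (intro exI[of _ "[x]"] exI[of _ "[]"]) (simp add: is_path_def inner_open_def end_arrival_def)
next
  case (open_walk_step v a k w)
  then obtain vs es where walk: "is_path V E H vs es" "inner_open vs es" "hd vs = x" "last vs = v"
    "end_arrival es = a" by blast
  then have "vs \<noteq> []" "length es = length vs - 1"
    by (simp_all add: is_path_def)
  then show ?case
    using walk open_walk_step.hyps
    by (intro exI[of _ "vs @ [w]"] exI[of _ "es @ [k]"])
      (simp add: is_path_snoc inner_open_snoc end_arrival_def)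
qed

lemma path_imp_open_walk:
  assumes "is_path V E H vs es" and "inner_open vs es"
  shows "open_walk (hd vs) (last vs) (end_arrival es)"
  using assms
proof (induction es arbitrary: vs rule: rev_induct)
  case Nil
  then obtain v where "vs = [v]" "v \<in> V"
    by (cases vs) (auto simp: is_path_def)
  then show ?case
    by (simp add: end_arrival_def open_walk_start)
next
  case (snoc k es)
  obtain us w where vs: "vs = us @ [w]"
    using snoc.prems(1) by (metis is_path_def rev_exhaust)
  have len: "length es = length us - 1" and "us \<noteq> []"
    using snoc.prems(1) by (auto simp: is_path_def vs)
  then have path: "is_path V E H us es" "edge_ok E H (last us) k w" "w \<in> V"
    and "inner_open us es" "passable (last us) (end_arrival es) k"
    using snoc.prems by (simp_all add: vs is_path_snoc inner_open_snoc)
  then have "open_walk (hd us) w (arrival_of k)"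
    using snoc.IH open_walk_step by blast
  then show ?case
    using \<open>us \<noteq> []\<close> by (simp add: vs end_arrival_def)
qed

definition d_connected :: "'a set \<Rightarrow> 'a set \<Rightarrow> bool" where
  "d_connected X Y \<longleftrightarrow> (\<exists>x \<in> X - Z. \<exists>y \<in> Y - Z. \<exists>a. open_walk x y a)"

lemma d_connected_iff_unblocked_path:
  "d_connected X Y \<longleftrightarrow>
    (\<exists>vs es. is_path V E H vs es \<and> hd vs \<in> X \<and> last vs \<in> Y \<and> \<not> blocked E Z vs es)"
  unfolding d_connected_def blocked_iff_not_inner_open
  using open_walk_imp_path path_imp_open_walk by blast

lemma d_sep_iff_not_d_connected:
  "d_sep V E H X Y Z \<longleftrightarrow> \<not> d_connected X Y \<and> \<not> d_connected Y X"
  unfolding d_sep_def d_connected_iff_unblocked_path by blast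

lemma open_walk_Start: "open_walk x v Start \<Longrightarrow> v = x"
  by (cases rule: open_walk.cases) (auto simp: arrival_of_def split: if_splits)

abbreviation moral_on :: "'a set \<Rightarrow> 'a \<Rightarrow> 'a \<Rightarrow> bool" where
  "moral_on B \<equiv> moral_adj B (induced_E E B) (induced_H H B)"

(* u \<rightarrow> c1 \<leftrightarrow> ... \<leftrightarrow> cn = v, or u = c1, inside B; then u is moral-adjacent to v and to every
   parent of v. *)
inductive moral_half :: "'a set \<Rightarrow> 'a \<Rightarrow> 'a \<Rightarrow> bool" for B where
  moral_half_refl: "u \<in> B \<Longrightarrow> moral_half B u u"
| moral_half_parent: "u \<in> Pa (induced_E E B) v \<Longrightarrow> moral_half B u v"
| moral_half_bidir: "moral_half B u v \<Longrightarrow> bidir (induced_H H B) v w \<Longrightarrow> moral_half B u w"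

lemma moral_half_in: "moral_half B u v \<Longrightarrow> u \<in> B \<and> v \<in> B"
  by (induction rule: moral_half.induct) (auto simp: Pa_induced_E_iff bidir_induced_H_iff)

lemma moral_half_iff_chain:
  "moral_half B u v \<longleftrightarrow> (\<exists>cs. cs \<noteq> [] \<and> set cs \<subseteq> B \<and> successively (bidir (induced_H H B)) cs
    \<and> u \<in> {hd cs} \<union> Pa (induced_E E B) (hd cs) \<and> last cs = v)" (is "_ \<longleftrightarrow> ?chain")
proof
  assume "moral_half B u v"
  then show ?chain
  proof (induction rule: moral_half.induct)
    case (moral_half_refl u)
    then show ?case by (intro exI[of _ "[u]"]) simp
  next
    case (moral_half_parent u v)
    then show ?case by (intro exI[of _ "[v]"]) (simp add: Pa_induced_E_iff)
  next
    case (moral_half_bidir u v w)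
    then obtain cs where "cs \<noteq> []" "set cs \<subseteq> B" "successively (bidir (induced_H H B)) cs"
      "u \<in> {hd cs} \<union> Pa (induced_E E B) (hd cs)" "last cs = v"
      by blast
    then show ?case
      using moral_half_bidir.hyps(2)
      by (intro exI[of _ "cs @ [w]"]) (simp add: successively_append_iff bidir_induced_H_iff)
  qed
next
  assume ?chain
  then obtain cs where "cs \<noteq> []" "set cs \<subseteq> B" "successively (bidir (induced_H H B)) cs"
    "u \<in> {hd cs} \<union> Pa (induced_E E B) (hd cs)" "last cs = v"
    by blast
  then show "moral_half B u v"
  proof (induction cs arbitrary: v rule: rev_induct)
    case (snoc c cs)
    show ?case
    proof (cases "cs = []")
      case True
      then have "u = c \<or> u \<in> Pa (induced_E E B) c" "c \<in> B" "c = v"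
        using snoc.prems by simp_all
      then show ?thesis
        by (auto intro: moral_half_refl moral_half_parent)
    next
      case False
      then have "moral_half B u (last cs)" and "bidir (induced_H H B) (last cs) c" "c = v"
        using snoc by (simp_all add: successively_append_iff)
      then show ?thesis
        by (blast intro: moral_half_bidir)
    qed
  qed simp
qed

lemma moral_adj_iff_moral_half:
  "moral_on B u w \<longleftrightarrow> u \<noteq> w \<and> (\<exists>v. moral_half B u v \<and> w \<in> {v} \<union> Pa (induced_E E B) v)"
  unfolding moral_adj_def moral_half_iff_chain successively_iff_nth by blast

definition moral_reach :: "'a set \<Rightarrow> 'a \<Rightarrow> 'a \<Rightarrow> bool" where
  "moral_reach B x u \<longleftrightarrow> (\<exists>ms. upath B (moral_on B) ms \<and> hd ms = x \<and> last ms = u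
    \<and> set (butlast ms) \<inter> Z = {})"

lemma moral_reach_refl: "x \<in> B \<Longrightarrow> moral_reach B x x"
  unfolding moral_reach_def by (intro exI[of _ "[x]"]) (simp add: upath_def)

lemma moral_reach_avoiding:
  assumes "moral_reach B x u" and "u \<notin> Z"
  shows "\<exists>ms. upath B (moral_on B) ms \<and> hd ms = x \<and> last ms = u \<and> set ms \<inter> Z = {}"
proof -
  obtain ms where ms: "upath B (moral_on B) ms" "hd ms = x" "last ms = u" "set (butlast ms) \<inter> Z = {}"
    using assms(1) unfolding moral_reach_def by blast
  then have "set ms = insert u (set (butlast ms))"
    by (simp add: upath_def set_eq_insert_last_butlast)
  then show ?thesis
    using ms assms(2) by (intro exI[of _ ms]) auto
qed

lemma moral_reach_step:
  assumes "moral_reach B x u" and "u \<notin> Z" and "moral_half B u v"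
    and "w \<in> {v} \<union> Pa (induced_E E B) v"
  shows "moral_reach B x w"
proof (cases "u = w")
  case False
  obtain ms where ms: "upath B (moral_on B) ms" "hd ms = x" "last ms = u" "set ms \<inter> Z = {}"
    using moral_reach_avoiding assms(1,2) by blast
  have "w \<in> B"
    using assms(3,4) moral_half_in by (auto simp: Pa_induced_E_iff)
  moreover have "moral_on B u w"
    using assms(3,4) False by (auto simp: moral_adj_iff_moral_half)
  ultimately have "upath B (moral_on B) (ms @ [w])"
    using ms by (simp add: upath_snoc)
  then show ?thesis
    unfolding moral_reach_def using ms by (intro exI[of _ "ms @ [w]"]) (auto simp: upath_def)
qed (use assms(1) in simp)

(* The non-colliders of the walk become nodes of the moral path. After a non-collider u the
   moral edge is pending while the walk runs through colliders (ancestors of Z, hence in B),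
   and it is closed at the next non-collider. *)
lemma open_walk_moral_reach:
  assumes "open_walk x v a"
    and parents_closed: "\<And>u w. (u, w) \<in> E \<Longrightarrow> w \<in> B \<Longrightarrow> u \<in> B"
    and "Anc E Z \<subseteq> B" and "x \<in> B" and "x \<notin> Z"
  shows "if a = Head then v \<in> B \<longrightarrow> (\<exists>u. u \<notin> Z \<and> moral_reach B x u \<and> moral_half B u v)
    else v \<in> B \<and> moral_reach B x v"
  using assms(1)
proof (induction rule: open_walk.induct)
  case open_walk_start
  then show ?case
    using assms(4) by (simp add: moral_reach_refl)
next
  case (open_walk_step v a k w)
  have v_in: "v \<in> B" if "a \<noteq> Head \<or> k \<noteq> Fwd"
    using open_walk_step.IH open_walk_step.hyps(4) that assms(3)
    by (auto simp: passable_def split: if_splits)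
  have "a = Start \<Longrightarrow> v = x"
    using open_walk_Start open_walk_step.hyps(1) by blast
  then have v_notin: "v \<notin> Z" if "a \<noteq> Head \<or> k = Fwd"
    using open_walk_step.hyps(4) that assms(5) by (auto simp: passable_def split: if_splits)
  have reach: "\<exists>u. u \<notin> Z \<and> moral_reach B x u \<and> moral_half B u v" if "v \<in> B"
  proof (cases "a = Head")
    case False
    then show ?thesis
      using open_walk_step.IH v_notin that by (auto intro: moral_half_refl)
  qed (use open_walk_step.IH that in simp)
  show ?case
  proof (cases k)
    case Fwd
    have "\<exists>u. u \<notin> Z \<and> moral_reach B x u \<and> moral_half B u w" if "w \<in> B"
    proof (intro exI[of _ v] conjI)
      have "(v, w) \<in> E"
        using open_walk_step.hyps(2) Fwd by (simp add: edge_ok_def)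
      then show "moral_half B v w"
        using that parents_closed by (simp add: moral_half_parent Pa_induced_E_iff)
      then obtain u where "u \<notin> Z" "moral_reach B x u" "moral_half B u v"
        using reach moral_half_in by blast
      then show "moral_reach B x v"
        using moral_reach_step by blast
      show "v \<notin> Z"
        using v_notin Fwd by simp
    qed
    then show ?thesis
      using Fwd by (simp add: arrival_of_def)
  next
    case Bwd
    have "(w, v) \<in> E" "v \<in> B"
      using open_walk_step.hyps(2) v_in Bwd by (simp_all add: edge_ok_def)
    then have "w \<in> Pa (induced_E E B) v"
      using parents_closed by (simp add: Pa_induced_E_iff)
    moreover obtain u where "u \<notin> Z" "moral_reach B x u" "moral_half B u v"
      using reach \<open>v \<in> B\<close> by blast
    ultimately have "w \<in> B" "moral_reach B x w"
      using moral_reach_step by (auto simp: Pa_induced_E_iff)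
    then show ?thesis
      using Bwd by (simp add: arrival_of_def)
  next
    case Bi
    have "v \<in> B"
      using v_in Bi by simp
    then obtain u where "u \<notin> Z" "moral_reach B x u" "moral_half B u v"
      using reach by blast
    moreover have "bidir (induced_H H B) v w" if "w \<in> B"
      using open_walk_step.hyps(2) Bi \<open>v \<in> B\<close> that by (simp add: edge_ok_def bidir_induced_H_iff)
    ultimately show ?thesis
      using Bi by (auto simp: arrival_of_def intro: moral_half_bidir)
  qed
qed

lemma open_walk_imp_moral_path:
  assumes "open_walk x y a"
    and "\<And>u w. (u, w) \<in> E \<Longrightarrow> w \<in> B \<Longrightarrow> u \<in> B" and "Anc E Z \<subseteq> B"
    and "x \<in> B" and "x \<notin> Z" and "y \<in> B" and "y \<notin> Z"
  shows "\<exists>ms. upath B (moral_on B) ms \<and> hd ms = x \<and> last ms = y \<and> set ms \<inter> Z = {}"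
proof -
  have "if a = Head then y \<in> B \<longrightarrow> (\<exists>u. u \<notin> Z \<and> moral_reach B x u \<and> moral_half B u y)
    else y \<in> B \<and> moral_reach B x y"
    using assms(1-5) by (rule open_walk_moral_reach)
  then have "moral_reach B x y"
    using assms(6) moral_reach_step by (cases "a = Head") auto
  then show ?thesis
    using moral_reach_avoiding assms(7) by blast
qed

(* v is reached from X by an open walk that stays open when continued along any edge with an
   arrowhead at v, and along any edge at all if v \<notin> Z. *)
definition open_from :: "'a set \<Rightarrow> 'a \<Rightarrow> bool" where
  "open_from X v \<longleftrightarrow> (\<exists>x \<in> X - Z. \<exists>a. open_walk x v a \<and> (if a = Head then v \<in> Anc E Z else v \<notin> Z))"

lemma open_from_passable:
  assumes "open_from X v" and "k \<noteq> Fwd \<or> v \<notin> Z"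
  obtains x a where "x \<in> X - Z" and "open_walk x v a" and "passable v a k"
proof -
  obtain x a where "x \<in> X - Z" "open_walk x v a" "if a = Head then v \<in> Anc E Z else v \<notin> Z"
    using assms(1) unfolding open_from_def by blast
  moreover have "passable v a k"
    using calculation(3) assms(2) by (cases "a = Head") (auto simp: passable_def)
  ultimately show ?thesis
    using that by blast
qed

lemma open_walk_forward:
  assumes "(v, t) \<in> E\<^sup>*" and "open_walk x v a" and "v \<notin> Anc E Z"
  shows "\<exists>a'. open_walk x t a'"
  using assms(1)
proof (induction rule: rtrancl_induct)
  case (step u t)
  obtain a' where "open_walk x u a'"
    using step.IH by blast
  moreover have "edge_ok E H u Fwd t" and "t \<in> V"
    using step.hyps(2) edges_in_nodes by (auto simp: edge_ok_def)
  moreover have "u \<notin> Anc E Z"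
    using Anc_rtrancl_closed[OF step.hyps(1)] assms(3) by blast
  then have "passable u a' Fwd"
    using subset_Anc[of Z E] by (auto simp: passable_def)
  ultimately show ?case
    by (metis open_walk_step)
qed (use assms(2) in blast)

lemma open_walk_backward:
  assumes "(v, t) \<in> E\<^sup>*" and "t \<in> V" and "v \<notin> Anc E Z"
  shows "\<exists>a. a \<noteq> Head \<and> open_walk t v a"
  using assms(1,3)
proof (induction rule: converse_rtrancl_induct)
  case base
  then show ?case
    using assms(2) open_walk_start by blast
next
  case (step v u)
  have "u \<notin> Anc E Z"
    using step.prems Anc_rtrancl_closed[OF r_into_rtrancl[OF step.hyps(1)]] by blast
  then obtain a where walk: "open_walk t u a" and "a \<noteq> Head"
    using step.IH by blast
  have "edge_ok E H u Bwd v" and "v \<in> V"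
    using step.hyps(1) edges_in_nodes by (auto simp: edge_ok_def)
  moreover have "passable u a Bwd"
    using \<open>u \<notin> Anc E Z\<close> \<open>a \<noteq> Head\<close> subset_Anc[of Z E] by (auto simp: passable_def)
  ultimately have "open_walk t v (arrival_of Bwd)"
    by (rule open_walk_step[OF walk])
  then show ?case
    by (auto simp: arrival_of_def)
qed

context
  fixes X Y A :: "'a set"
  assumes X_nodes: "X \<subseteq> V" and A_nodes: "A \<subseteq> V" and A_ancestral: "A \<subseteq> Anc E (X \<union> Y \<union> Z)"
begin

lemma open_from_or_d_connected:
  assumes "open_walk x v Head" and "x \<in> X - Z" and "v \<in> A"
  shows "open_from X v \<or> d_connected X Y"
proof (cases "v \<in> Anc E Z")
  case True
  then have "open_from X v"
    using assms(1,2) unfolding open_from_def by (intro bexI[of _ x] exI[of _ Head]) simp_all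
  then show ?thesis ..
next
  case False
  obtain t where t: "t \<in> X \<union> Y \<union> Z" "(v, t) \<in> E\<^sup>*"
    using assms(3) A_ancestral unfolding Anc_def by blast
  have "t \<notin> Anc E Z"
    using Anc_rtrancl_closed[OF t(2)] False by blast
  then have "t \<notin> Z"
    using subset_Anc[of Z E] by blast
  then consider "t \<in> Y - Z" | "t \<in> X - Z"
    using t(1) by blast
  then show ?thesis
  proof cases
    case 1
    then show ?thesis
      using open_walk_forward[OF t(2) assms(1) False] assms(2) unfolding d_connected_def by blast
  next
    case 2
    then obtain a where "a \<noteq> Head" "open_walk t v a"
      using open_walk_backward[OF t(2) _ False] X_nodes by blast
    moreover have "v \<notin> Z"
      using False subset_Anc[of Z E] by blast
    ultimately have "open_from X v"
      using 2 unfolding open_from_def by (intro bexI[of _ t] exI[of _ a]) simp_all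
    then show ?thesis ..
  qed
qed

lemma open_from_head_step:
  assumes "open_from X v" and "edge_ok E H v k w" and "k \<noteq> Bwd" and "w \<in> A"
    and "k = Fwd \<Longrightarrow> v \<notin> Z"
  shows "open_from X w \<or> d_connected X Y"
proof -
  obtain x a where "x \<in> X - Z" "open_walk x v a" "passable v a k"
    using open_from_passable assms(1,5) by blast
  then have "open_walk x w (arrival_of k)"
    using open_walk_step assms(2,4) A_nodes by blast
  then show ?thesis
    using open_from_or_d_connected \<open>x \<in> X - Z\<close> assms(3,4) by (simp add: arrival_of_def)
qed

lemma open_from_tail_step:
  assumes "open_from X v" and "(w, v) \<in> E" and "w \<notin> Z"
  shows "open_from X w"
proof -
  obtain x a where "x \<in> X - Z" "open_walk x v a" "passable v a Bwd"
    using open_from_passable assms(1) by blast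
  moreover have "edge_ok E H v Bwd w" "w \<in> V"
    using assms(2) edges_in_nodes by (auto simp: edge_ok_def)
  ultimately have "open_walk x w (arrival_of Bwd)"
    using open_walk_step by blast
  then show ?thesis
    using \<open>x \<in> X - Z\<close> assms(3) unfolding open_from_def by (auto simp: arrival_of_def)
qed

lemma open_from_moral_half:
  assumes "moral_half A u v" and "open_from X u" and "u \<notin> Z"
  shows "open_from X v \<or> d_connected X Y"
  using assms
proof (induction rule: moral_half.induct)
  case (moral_half_parent u v)
  then show ?case
    by (intro open_from_head_step[of u Fwd]) (auto simp: edge_ok_def Pa_induced_E_iff)
next
  case (moral_half_bidir u v w)
  then show ?case
    using open_from_head_step[of v Bi w]
    by (auto simp: edge_ok_def bidir_induced_H_iff)
qed simp

lemma open_from_moral_adj: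
  assumes "moral_on A u w" and "open_from X u" and "u \<notin> Z" and "w \<notin> Z"
  shows "open_from X w \<or> d_connected X Y"
proof -
  obtain v where "moral_half A u v" and w: "w \<in> {v} \<union> Pa (induced_E E A) v"
    using assms(1) by (auto simp: moral_adj_iff_moral_half)
  then have "open_from X v \<or> d_connected X Y"
    using open_from_moral_half assms(2,3) by blast
  then show ?thesis
    using w open_from_tail_step assms(4) by (auto simp: Pa_induced_E_iff)
qed

lemma open_from_moral_path:
  assumes "upath A (moral_on A) ms" and "set ms \<inter> Z = {}" and "open_from X (hd ms)"
  shows "open_from X (last ms) \<or> d_connected X Y"
  using assms
proof (induction ms)
  case (Cons u ms)
  show ?case
  proof (cases ms)
    case (Cons w ms')
    then have "moral_on A u w" and "upath A (moral_on A) ms"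
      using Cons.prems(1) by (auto simp: upath_iff_successively)
    then have "open_from X w \<or> d_connected X Y"
      using open_from_moral_adj Cons.prems(2,3) \<open>ms = w # ms'\<close> by auto
    then show ?thesis
      using Cons.IH \<open>upath A (moral_on A) ms\<close> Cons.prems(2) \<open>ms = w # ms'\<close> by auto
  qed (use Cons.prems(3) in simp)
qed (simp add: upath_def)

lemma moral_path_imp_d_connected:
  assumes "upath A (moral_on A) ms" and "set ms \<inter> Z = {}" and "hd ms \<in> X" and "last ms \<in> Y"
  shows "d_connected X Y"
proof -
  have "ms \<noteq> []"
    using assms(1) by (simp add: upath_def)
  then have "hd ms \<notin> Z" "last ms \<notin> Z"
    using assms(2) by (auto dest: hd_in_set last_in_set)
  then have "open_from X (hd ms)"
    using assms(3) X_nodes open_walk_start unfolding open_from_def by fastforce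
  then have "open_from X (last ms) \<or> d_connected X Y"
    using open_from_moral_path assms(1,2) by blast
  then show ?thesis
    using assms(4) \<open>last ms \<notin> Z\<close> unfolding open_from_def d_connected_def by blast
qed

end

lemma d_connected_iff_moral_path:
  assumes "X \<subseteq> V" and "Y \<subseteq> V" and "Z \<subseteq> V"
  defines "A \<equiv> Anc E (X \<union> Y \<union> Z)"
  shows "d_connected X Y \<longleftrightarrow>
    (\<exists>ms. upath A (moral_on A) ms \<and> hd ms \<in> X \<and> last ms \<in> Y \<and> set ms \<inter> Z = {})"
proof
  assume "d_connected X Y"
  then obtain x y a where x: "x \<in> X - Z" and y: "y \<in> Y - Z" and walk: "open_walk x y a"
    unfolding d_connected_def by blast
  have "\<exists>ms. upath A (moral_on A) ms \<and> hd ms = x \<and> last ms = y \<and> set ms \<inter> Z = {}"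
  proof (rule open_walk_imp_moral_path[OF walk])
    show "u \<in> A" if "(u, w) \<in> E" and "w \<in> A" for u w
      using that Anc_rtrancl_closed[OF r_into_rtrancl] unfolding A_def by metis
    show "Anc E Z \<subseteq> A"
      unfolding A_def by (rule Anc_mono) blast
    show "x \<in> A" "y \<in> A"
      using x y subset_Anc[of "X \<union> Y \<union> Z" E] unfolding A_def by blast+
  qed (use x y in blast)+
  then show "\<exists>ms. upath A (moral_on A) ms \<and> hd ms \<in> X \<and> last ms \<in> Y \<and> set ms \<inter> Z = {}"
    using x y by blast
next
  assume "\<exists>ms. upath A (moral_on A) ms \<and> hd ms \<in> X \<and> last ms \<in> Y \<and> set ms \<inter> Z = {}"
  then obtain ms where "upath A (moral_on A) ms" "set ms \<inter> Z = {}" "hd ms \<in> X" "last ms \<in> Y"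
    by blast
  moreover have "A \<subseteq> V"
    unfolding A_def using assms(1-3) edges_in_nodes by (simp add: Anc_subset)
  moreover have "A \<subseteq> Anc E (X \<union> Y \<union> Z)"
    unfolding A_def ..
  ultimately show "d_connected X Y"
    using moral_path_imp_d_connected[OF assms(1)] by blast
qed

end

theorem mainTheorem4:
  fixes V :: "'a set" and E :: "('a \<times> 'a) set" and H :: "'a set set"
    and X Y Z :: "'a set"
  assumes "hedg V E H"
    and "X \<subseteq> V" and "Y \<subseteq> V" and "Z \<subseteq> V"
  defines "A \<equiv> Anc E (X \<union> Y \<union> Z)"
  shows "d_sep V E H X Y Z \<longleftrightarrow>
    usep A (moral_adj A (induced_E E A) (induced_H H A)) X Y Z"
proof -
  interpret hedg_walks V E H Z
    using assms(1) by unfold_locales (simp add: hedg_def)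
  let ?avoiding_path = "\<lambda>P Q. \<exists>ms. upath A (moral_adj A (induced_E E A) (induced_H H A)) ms
    \<and> hd ms \<in> P \<and> last ms \<in> Q \<and> set ms \<inter> Z = {}"
  have "d_connected X Y \<longleftrightarrow> ?avoiding_path X Y"
    using d_connected_iff_moral_path[OF assms(2-4)] unfolding A_def .
  moreover have "d_connected Y X \<longleftrightarrow> ?avoiding_path Y X"
    using d_connected_iff_moral_path[OF assms(3,2,4)] unfolding A_def by (simp add: Un_commute)
  moreover have "usep A (moral_adj A (induced_E E A) (induced_H H A)) X Y Z \<longleftrightarrow>
      \<not> ?avoiding_path X Y \<and> \<not> ?avoiding_path Y X"
    unfolding usep_def by blast
  ultimately show ?thesis
    by (simp add: d_sep_iff_not_d_connected)
qed

end
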